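(* The path functor $P:\mathsf{RSRel}\to\mathsf{Met}$ is a morphism of weakly closed monoidal refinements of $\mathsf{Set}$ from $(\mathsf{RSRel},1,\times,M,q)$ to $(\mathsf{Met},1,\times,\infty\cdot-,p)$; that is: (1) $P$ is strict symmetric monoidal from $(\mathsf{RSRel},1,\times)$ to $(\mathsf{Met},1,\times)$; (2) $(\mathrm{Id}_{\mathsf{Set}},P)$ is a map of adjunctions from $M\dashv q$ to $\infty\cdot-\dashv p$ (in particular $P\circ M=\infty\cdot-$ and $p\circ P=q$); and (3) for every set $X$, $(P,P)$ is a map of adjunctions from $(-\times MX\dashv MX\Rightarrow -)$ on $\mathsf{RSRel}$ to $(-\times(\infty\cdot X)\dashv(\infty\cdot X)\multimap -)$ on $\mathsf{Met}$.
   Context: $\mathsf{RSRel}$: objects are sets with a reflexive symmetric relation, morphisms relation-preserving functions; $1$ is the one-point set with the full relation; $X\times Y$ is $|X|\times|Y|$ with $(x,y)\sim(x',y')$ iff $x\sim x'$ and $y\sim y'$; $X\Rightarrow Y$ is the set of all functions $|X|\to|Y|$ with $f\sim f'$ iff $x\sim x'$ implies $f(x)\sim f'(x')$. $q:\mathsf{RSRel}\to\mathsf{Set}$ is the forgetful functor and $M:\mathsf{Set}\to\mathsf{RSRel}$ equips a set with the equality relation ($M\dashv q$ with identity unit). $\mathsf{Met}$: extended pseudo-metric spaces ($d:|X|^2\to[0,\infty]$, $d(x,x)=0$, symmetric, triangle inequality) and non-expansive maps; $1$ is the one-point space; $X\times Y$ is $|X|\times|Y|$ with $d=\max(d_X,d_Y)$;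 for a set $X$, $\infty\cdot X$ has $d(x,x')=\infty$ for $x\neq x'$; $A\multimap B$ is the set of non-expansive maps with metric $\sup_x d_B(a(x),b(x))$; $p:\mathsf{Met}\to\mathsf{Set}$ is the forgetful functor ($\infty\cdot-\dashv p$ with identity unit). Both $(\mathsf{RSRel},1,\times,M,q)$ and $(\mathsf{Met},1,\times,\infty\cdot-,p)$ are weakly closed monoidal refinements of $\mathsf{Set}$ (a symmetric monoidal category with an adjunction $L\dashv p$ to $\mathsf{Set}$ where $p$ is strict monoidal and faithful, the unit is the identity, each $-\otimes LX$ has a right adjoint, and $(p,p)$ is a map of adjunctions to $(-\times X\dashv X\Rightarrow-)$ in $\mathsf{Set}$). A map of adjunctions $(F,G)$ from $\langle L,R,\eta\rangle:\mathbb{C}\rightharpoonup\mathbb{D}$ to $\langle L',R',\eta'\rangle:\mathbb{C}'\rightharpoonup\mathbb{D}'$ is a pair of functors with $G\circ L=L'\circ F$, $F\circ R=R'\circ G$, $F\eta=\eta'F$. $P$ sends $X\in\mathsf{RSRel}$ to $|X|$ with the path metric ($d(x,x')$ = least $k$ with a chain $x=x_0\sim x_1\sim\dots\sim x_k=x'$, or $\infty$ if none) and is the identity on morphisms. *)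

theory Defs
  imports Main "HOL-Library.FuncSet" "HOL-Library.Extended_Nonnegative_Real"
begin

text \<open>An object is a carrier set together with a relation; the relation is
required to live on the carrier (it is False outside), so that equality of
objects is plain HOL equality.\<close>

record 'a rsrel =
  rcarrier :: "'a set"
  rrel :: "'a \<Rightarrow> 'a \<Rightarrow> bool"

definition rs_obj :: "'a rsrel \<Rightarrow> bool" where
  "rs_obj X \<longleftrightarrow> (\<forall>x\<in>rcarrier X. rrel X x x)
     \<and> (\<forall>x y. rrel X x y \<longrightarrow> rrel X y x)
     \<and> (\<forall>x y. rrel X x y \<longrightarrow> x \<in> rcarrier X \<and> y \<in> rcarrier X)"

definition rs_hom :: "'a rsrel \<Rightarrow> 'b rsrel \<Rightarrow> ('a \<Rightarrow> 'b) set" where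
  "rs_hom X Y = {f. f \<in> rcarrier X \<rightarrow> rcarrier Y
      \<and> (\<forall>x y. rrel X x y \<longrightarrow> rrel Y (f x) (f y))}"

definition rs_id :: "'a rsrel \<Rightarrow> 'a \<Rightarrow> 'a" where
  "rs_id X = restrict (\<lambda>x. x) (rcarrier X)"

definition rs_one :: "unit rsrel" where
  "rs_one = \<lparr>rcarrier = UNIV, rrel = (\<lambda>_ _. True)\<rparr>"

definition rs_prod :: "'a rsrel \<Rightarrow> 'b rsrel \<Rightarrow> ('a \<times> 'b) rsrel" where
  "rs_prod X Y = \<lparr>rcarrier = rcarrier X \<times> rcarrier Y,
     rrel = (\<lambda>(x, y) (x', y'). rrel X x x' \<and> rrel Y y y')\<rparr>"

definition rs_prod_mor :: "('a \<Rightarrow> 'c) \<Rightarrow> ('b \<Rightarrow> 'd) \<Rightarrow> 'a \<times> 'b \<Rightarrow> 'c \<times> 'd" where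
  "rs_prod_mor f g = map_prod f g"

definition rs_assoc :: "('a \<times> 'b) \<times> 'c \<Rightarrow> 'a \<times> ('b \<times> 'c)" where
  "rs_assoc = (\<lambda>((x, y), z). (x, (y, z)))"
definition rs_lunit :: "unit \<times> 'a \<Rightarrow> 'a" where
  "rs_lunit = snd"
definition rs_runit :: "'a \<times> unit \<Rightarrow> 'a" where
  "rs_runit = fst"
definition rs_swap :: "'a \<times> 'b \<Rightarrow> 'b \<times> 'a" where
  "rs_swap = prod.swap"

definition rs_exp :: "'a rsrel \<Rightarrow> 'b rsrel \<Rightarrow> ('a \<Rightarrow> 'b) rsrel" where
  "rs_exp X Y = \<lparr>rcarrier = rcarrier X \<rightarrow>\<^sub>E rcarrier Y,
     rrel = (\<lambda>f g. f \<in> rcarrier X \<rightarrow>\<^sub>E rcarrier Y \<and> g \<in> rcarrier X \<rightarrow>\<^sub>E rcarrier Y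
        \<and> (\<forall>x x'. rrel X x x' \<longrightarrow> rrel Y (f x) (g x')))\<rparr>"

definition rs_exp_mor :: "'a rsrel \<Rightarrow> ('b \<Rightarrow> 'c) \<Rightarrow> ('a \<Rightarrow> 'b) \<Rightarrow> ('a \<Rightarrow> 'c)" where
  "rs_exp_mor X g = (\<lambda>h. restrict (g \<circ> h) (rcarrier X))"

definition rs_exp_unit :: "'a rsrel \<Rightarrow> 'b rsrel \<Rightarrow> 'b \<Rightarrow> ('a \<Rightarrow> 'b \<times> 'a)" where
  "rs_exp_unit X Y = (\<lambda>y. restrict (\<lambda>x. (y, x)) (rcarrier X))"

definition rs_M :: "'a set \<Rightarrow> 'a rsrel" where
  "rs_M S = \<lparr>rcarrier = S, rrel = (\<lambda>x y. x \<in> S \<and> x = y)\<rparr>"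

definition rs_M_mor :: "('a \<Rightarrow> 'b) \<Rightarrow> 'a \<Rightarrow> 'b" where
  "rs_M_mor f = f"

definition rs_q :: "'a rsrel \<Rightarrow> 'a set" where
  "rs_q X = rcarrier X"

definition rs_q_mor :: "('a \<Rightarrow> 'b) \<Rightarrow> 'a \<Rightarrow> 'b" where
  "rs_q_mor f = f"

definition rs_Mq_unit :: "'a set \<Rightarrow> 'a \<Rightarrow> 'a" where
  "rs_Mq_unit S = restrict (\<lambda>x. x) S"

record 'a met =
  mcarrier :: "'a set"
  mdist :: "'a \<Rightarrow> 'a \<Rightarrow> ennreal"

text \<open>Distances are normalised to 0 outside the carrier.\<close>
definition met_obj :: "'a met \<Rightarrow> bool" where
  "met_obj A \<longleftrightarrow> (\<forall>x\<in>mcarrier A. mdist A x x = 0)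
     \<and> (\<forall>x\<in>mcarrier A. \<forall>y\<in>mcarrier A. mdist A x y = mdist A y x)
     \<and> (\<forall>x\<in>mcarrier A. \<forall>y\<in>mcarrier A. \<forall>z\<in>mcarrier A.
           mdist A x z \<le> mdist A x y + mdist A y z)
     \<and> (\<forall>x y. x \<notin> mcarrier A \<or> y \<notin> mcarrier A \<longrightarrow> mdist A x y = 0)"

definition met_hom :: "'a met \<Rightarrow> 'b met \<Rightarrow> ('a \<Rightarrow> 'b) set" where
  "met_hom A B = {f. f \<in> mcarrier A \<rightarrow> mcarrier B
      \<and> (\<forall>x\<in>mcarrier A. \<forall>y\<in>mcarrier A. mdist B (f x) (f y) \<le> mdist A x y)}"

definition met_id :: "'a met \<Rightarrow> 'a \<Rightarrow> 'a" where
  "met_id A = restrict (\<lambda>x. x) (mcarrier A)"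

definition met_one :: "unit met" where
  "met_one = \<lparr>mcarrier = UNIV, mdist = (\<lambda>_ _. 0)\<rparr>"

definition met_prod :: "'a met \<Rightarrow> 'b met \<Rightarrow> ('a \<times> 'b) met" where
  "met_prod A B = \<lparr>mcarrier = mcarrier A \<times> mcarrier B,
     mdist = (\<lambda>(x, y) (x', y').
        if (x, y) \<in> mcarrier A \<times> mcarrier B \<and> (x', y') \<in> mcarrier A \<times> mcarrier B
        then max (mdist A x x') (mdist B y y') else 0)\<rparr>"

definition met_prod_mor :: "('a \<Rightarrow> 'c) \<Rightarrow> ('b \<Rightarrow> 'd) \<Rightarrow> 'a \<times> 'b \<Rightarrow> 'c \<times> 'd" where
  "met_prod_mor f g = map_prod f g"

definition met_assoc :: "('a \<times> 'b) \<times> 'c \<Rightarrow> 'a \<times> ('b \<times> 'c)" where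
  "met_assoc = (\<lambda>((x, y), z). (x, (y, z)))"
definition met_lunit :: "unit \<times> 'a \<Rightarrow> 'a" where
  "met_lunit = snd"
definition met_runit :: "'a \<times> unit \<Rightarrow> 'a" where
  "met_runit = fst"
definition met_swap :: "'a \<times> 'b \<Rightarrow> 'b \<times> 'a" where
  "met_swap = prod.swap"

definition inf_met :: "'a set \<Rightarrow> 'a met" where
  "inf_met S = \<lparr>mcarrier = S,
     mdist = (\<lambda>x y. if x \<in> S \<and> y \<in> S \<and> x \<noteq> y then \<infinity> else 0)\<rparr>"

definition inf_met_mor :: "('a \<Rightarrow> 'b) \<Rightarrow> 'a \<Rightarrow> 'b" where
  "inf_met_mor f = f"

definition met_p :: "'a met \<Rightarrow> 'a set" where
  "met_p A = mcarrier A"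

definition met_p_mor :: "('a \<Rightarrow> 'b) \<Rightarrow> 'a \<Rightarrow> 'b" where
  "met_p_mor f = f"

definition met_inf_unit :: "'a set \<Rightarrow> 'a \<Rightarrow> 'a" where
  "met_inf_unit S = restrict (\<lambda>x. x) S"

definition met_lolli :: "'a met \<Rightarrow> 'b met \<Rightarrow> ('a \<Rightarrow> 'b) met" where
  "met_lolli A B = \<lparr>mcarrier = met_hom A B \<inter> extensional (mcarrier A),
     mdist = (\<lambda>a b. if a \<in> met_hom A B \<inter> extensional (mcarrier A)
                      \<and> b \<in> met_hom A B \<inter> extensional (mcarrier A)
                   then (SUP x\<in>mcarrier A. mdist B (a x) (b x)) else 0)\<rparr>"

definition met_lolli_mor :: "'a met \<Rightarrow> ('b \<Rightarrow> 'c) \<Rightarrow> ('a \<Rightarrow> 'b) \<Rightarrow> ('a \<Rightarrow> 'c)" where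
  "met_lolli_mor A g = (\<lambda>h. restrict (g \<circ> h) (mcarrier A))"

definition met_lolli_unit :: "'a met \<Rightarrow> 'b met \<Rightarrow> 'b \<Rightarrow> ('a \<Rightarrow> 'b \<times> 'a)" where
  "met_lolli_unit A B = (\<lambda>b. restrict (\<lambda>a. (b, a)) (mcarrier A))"

definition rs_chain :: "'a rsrel \<Rightarrow> nat \<Rightarrow> 'a \<Rightarrow> 'a \<Rightarrow> bool" where
  "rs_chain X k x x' \<longleftrightarrow> (\<exists>c :: nat \<Rightarrow> 'a. c 0 = x \<and> c k = x'
       \<and> (\<forall>i<k. rrel X (c i) (c (Suc i))))"

definition path_dist :: "'a rsrel \<Rightarrow> 'a \<Rightarrow> 'a \<Rightarrow> ennreal" where
  "path_dist X x x' =
     (if \<exists>k. rs_chain X k x x' then of_nat (LEAST k. rs_chain X k x x') else \<infinity>)"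

definition path_P :: "'a rsrel \<Rightarrow> 'a met" where
  "path_P X = \<lparr>mcarrier = rcarrier X,
     mdist = (\<lambda>x y. if x \<in> rcarrier X \<and> y \<in> rcarrier X then path_dist X x y else 0)\<rparr>"

definition path_P_mor :: "('a \<Rightarrow> 'b) \<Rightarrow> 'a \<Rightarrow> 'b" where
  "path_P_mor f = f"

end

theory Submission
  imports Defs
begin

text \<open>Since every relation is reflexive, a chain can be padded by repeating its last
point, so \<open>d(x, y) \<le> n\<close> holds iff there is a chain of length exactly \<open>n\<close>. Chains of
length \<open>n\<close> in \<open>X \<times> Y\<close> are pairs of chains of length \<open>n\<close>, which makes the path
metric of a product the maximum metric. Since \<open>M S\<close> carries equality, consecutive
functions of a chain in \<open>M S \<Rightarrow> Y\<close> are related pointwise, so such a chain is an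
\<open>S\<close>-indexed family of chains in \<open>Y\<close> and the path metric is the sup metric; in \<open>M S\<close>
itself only constant chains exist, giving \<open>\<infinity> \<cdot> S\<close>. On morphisms everything is the
identity.\<close>

lemma enat_leI:
  fixes a b :: enat
  assumes "\<And>n. b \<le> enat n \<Longrightarrow> a \<le> enat n"
  shows "a \<le> b"
  using assms by (cases b) auto

lemma enat_eqI:
  fixes a b :: enat
  assumes "\<And>n. a \<le> enat n \<longleftrightarrow> b \<le> enat n"
  shows "a = b"
  by (meson assms antisym enat_leI)

lemma rs_obj_prod: "rs_obj X \<Longrightarrow> rs_obj Y \<Longrightarrow> rs_obj (rs_prod X Y)"
  unfolding rs_obj_def rs_prod_def by auto

lemma rs_obj_M: "rs_obj (rs_M S)"
  unfolding rs_obj_def rs_M_def by auto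

lemma rs_obj_exp_M: "rs_obj Y \<Longrightarrow> rs_obj (rs_exp (rs_M S) Y)"
  unfolding rs_obj_def rs_exp_def rs_M_def PiE_def Pi_def by auto

lemma rcarrier_exp_M: "rcarrier (rs_exp (rs_M S) Y) = S \<rightarrow>\<^sub>E rcarrier Y"
  by (simp add: rs_exp_def rs_M_def)

lemma rs_chainI:
  assumes "c 0 = x" and "c k = y" and "\<And>i. i < k \<Longrightarrow> rrel X (c i) (c (Suc i))"
  shows "rs_chain X k x y"
  using assms unfolding rs_chain_def by blast

lemma rs_chainE:
  assumes "rs_chain X k x y"
  obtains c where "c 0 = x" and "c k = y" and "\<And>i. i < k \<Longrightarrow> rrel X (c i) (c (Suc i))"
  using assms unfolding rs_chain_def by blast

lemma rs_chain_refl: "rs_chain X 0 x x"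
  by (rule rs_chainI[where c = "\<lambda>_. x"]) auto

lemma rs_chain_pad:
  assumes X: "rs_obj X" and y: "y \<in> rcarrier X" and "rs_chain X k x y" and "k \<le> m"
  shows "rs_chain X m x y"
proof -
  obtain c where c: "c 0 = x" "c k = y" "\<And>i. i < k \<Longrightarrow> rrel X (c i) (c (Suc i))"
    using \<open>rs_chain X k x y\<close> by (erule rs_chainE)
  have "rrel X y y" using X y unfolding rs_obj_def by blast
  show ?thesis
  proof (rule rs_chainI[where c = "\<lambda>i. if i \<le> k then c i else y"])
    fix i
    show "rrel X (if i \<le> k then c i else y) (if Suc i \<le> k then c (Suc i) else y)"
      using c \<open>rrel X y y\<close> by (cases "i < k") (auto simp: le_Suc_eq)
  qed (use c \<open>k \<le> m\<close> in auto)
qed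

lemma rs_chain_sym:
  assumes X: "rs_obj X" and "rs_chain X k x y"
  shows "rs_chain X k y x"
proof -
  obtain c where c: "c 0 = x" "c k = y" "\<And>i. i < k \<Longrightarrow> rrel X (c i) (c (Suc i))"
    using \<open>rs_chain X k x y\<close> by (erule rs_chainE)
  show ?thesis
  proof (rule rs_chainI[where c = "\<lambda>i. c (k - i)"])
    fix i assume "i < k"
    then have "rrel X (c (k - Suc i)) (c (k - i))"
      using c(3)[of "k - Suc i"] by (simp add: Suc_diff_Suc)
    then show "rrel X (c (k - i)) (c (k - Suc i))"
      using X unfolding rs_obj_def by blast
  qed (use c in auto)
qed

lemma rs_chain_trans:
  assumes "rs_chain X a x y" and "rs_chain X b y z"
  shows "rs_chain X (a + b) x z"
proof -
  obtain c where c: "c 0 = x" "c a = y" "\<And>i. i < a \<Longrightarrow> rrel X (c i) (c (Suc i))"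
    using assms(1) by (erule rs_chainE)
  obtain d where d: "d 0 = y" "d b = z" "\<And>i. i < b \<Longrightarrow> rrel X (d i) (d (Suc i))"
    using assms(2) by (erule rs_chainE)
  show ?thesis
  proof (rule rs_chainI[where c = "\<lambda>i. if i \<le> a then c i else d (i - a)"])
    fix i assume "i < a + b"
    show "rrel X (if i \<le> a then c i else d (i - a)) (if Suc i \<le> a then c (Suc i) else d (Suc i - a))"
    proof (cases "i < a")
      case False
      then have "i - a < b" and "Suc i - a = Suc (i - a)" using \<open>i < a + b\<close> by auto
      then have "rrel X (d (i - a)) (d (Suc i - a))" using d(3) by simp
      then show ?thesis using False c(2) d(1) by (cases "i = a") auto
    qed (use c in auto)
  qed (use c d in auto)
qed

lemma rs_chain_hom:
  assumes "f \<in> rs_hom X Y" and "rs_chain X k x y"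
  shows "rs_chain Y k (f x) (f y)"
proof -
  obtain c where "c 0 = x" "c k = y" "\<And>i. i < k \<Longrightarrow> rrel X (c i) (c (Suc i))"
    using assms(2) by (erule rs_chainE)
  then show ?thesis
    using assms(1) unfolding rs_hom_def by (intro rs_chainI[where c = "\<lambda>i. f (c i)"]) auto
qed

lemma rs_chain_prod_iff:
  "rs_chain (rs_prod X Y) n (x, y) (x', y') \<longleftrightarrow> rs_chain X n x x' \<and> rs_chain Y n y y'"
proof
  assume "rs_chain (rs_prod X Y) n (x, y) (x', y')"
  then obtain c where c: "c 0 = (x, y)" "c n = (x', y')"
    and step: "\<And>i. i < n \<Longrightarrow> rrel (rs_prod X Y) (c i) (c (Suc i))"
    by (erule rs_chainE)
  have steps: "rrel X (fst (c i)) (fst (c (Suc i))) \<and> rrel Y (snd (c i)) (snd (c (Suc i)))"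
    if "i < n" for i
    using step[OF that] unfolding rs_prod_def by (simp add: case_prod_beta)
  have "rs_chain X n x x'"
    by (rule rs_chainI[where c = "\<lambda>i. fst (c i)"]) (use c steps in auto)
  moreover have "rs_chain Y n y y'"
    by (rule rs_chainI[where c = "\<lambda>i. snd (c i)"]) (use c steps in auto)
  ultimately show "rs_chain X n x x' \<and> rs_chain Y n y y'" ..
next
  assume "rs_chain X n x x' \<and> rs_chain Y n y y'"
  then have "rs_chain X n x x'" and "rs_chain Y n y y'" by simp_all
  obtain c where c: "c 0 = x" "c n = x'" "\<And>i. i < n \<Longrightarrow> rrel X (c i) (c (Suc i))"
    using \<open>rs_chain X n x x'\<close> by (erule rs_chainE)
  obtain d where d: "d 0 = y" "d n = y'" "\<And>i. i < n \<Longrightarrow> rrel Y (d i) (d (Suc i))"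
    using \<open>rs_chain Y n y y'\<close> by (erule rs_chainE)
  show "rs_chain (rs_prod X Y) n (x, y) (x', y')"
    by (rule rs_chainI[where c = "\<lambda>i. (c i, d i)"]) (use c d in \<open>auto simp: rs_prod_def\<close>)
qed

lemma rs_chain_M_eq:
  assumes "rs_chain (rs_M S) k x y"
  shows "x = y"
proof -
  obtain c where c: "c 0 = x" "c k = y" "\<And>i. i < k \<Longrightarrow> rrel (rs_M S) (c i) (c (Suc i))"
    using assms by (erule rs_chainE)
  have "c i = x" if "i \<le> k" for i
    using that
  proof (induction i)
    case (Suc i)
    have "rrel (rs_M S) (c i) (c (Suc i))" using c(3) Suc.prems by simp
    then show ?case using Suc by (simp add: rs_M_def)
  qed (simp add: c(1))
  then show "x = y" using c(2) by simp
qed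

lemma rs_chain_exp_M_iff:
  assumes Y: "rs_obj Y" and f: "f \<in> S \<rightarrow>\<^sub>E rcarrier Y" and g: "g \<in> S \<rightarrow>\<^sub>E rcarrier Y"
  shows "rs_chain (rs_exp (rs_M S) Y) n f g \<longleftrightarrow> (\<forall>x\<in>S. rs_chain Y n (f x) (g x))"
proof
  assume "rs_chain (rs_exp (rs_M S) Y) n f g"
  then obtain C where C: "C 0 = f" "C n = g"
    and step: "\<And>i. i < n \<Longrightarrow> rrel (rs_exp (rs_M S) Y) (C i) (C (Suc i))"
    by (erule rs_chainE)
  have "rs_chain Y n (f x) (g x)" if "x \<in> S" for x
  proof (rule rs_chainI[where c = "\<lambda>i. C i x"])
    fix i assume "i < n"
    show "rrel Y (C i x) (C (Suc i) x)"
      using step[OF \<open>i < n\<close>] \<open>x \<in> S\<close> unfolding rs_exp_def rs_M_def by auto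
  qed (use C in auto)
  then show "\<forall>x\<in>S. rs_chain Y n (f x) (g x)" ..
next
  assume "\<forall>x\<in>S. rs_chain Y n (f x) (g x)"
  then obtain c where c: "\<And>x. x \<in> S \<Longrightarrow>
      c x 0 = f x \<and> c x n = g x \<and> (\<forall>i<n. rrel Y (c x i) (c x (Suc i)))"
    unfolding rs_chain_def by metis
  define C where "C i = restrict (\<lambda>x. c x i) S" for i
  show "rs_chain (rs_exp (rs_M S) Y) n f g"
  proof (rule rs_chainI[where c = C])
    show "C 0 = f" and "C n = g" using c f g by (auto simp: C_def PiE_def extensional_def)
  next
    fix i assume "i < n"
    have "c x i \<in> rcarrier Y \<and> c x (Suc i) \<in> rcarrier Y" if "x \<in> S" for x
      using c[OF that] \<open>i < n\<close> Y unfolding rs_obj_def by blast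
    then show "rrel (rs_exp (rs_M S) Y) (C i) (C (Suc i))"
      using c \<open>i < n\<close> unfolding rs_exp_def rs_M_def by (auto simp: C_def)
  qed
qed

text \<open>The path distance as an extended natural number: in \<^typ>\<open>enat\<close>, unlike in
\<^typ>\<open>ennreal\<close>, a value is determined by the bounds \<open>enat n\<close> it satisfies
(\<open>enat_eqI\<close>), and these bounds are exactly the existence of chains of length \<open>n\<close>.\<close>

definition hop_dist :: "'a rsrel \<Rightarrow> 'a \<Rightarrow> 'a \<Rightarrow> enat" where
  "hop_dist X x y =
     (if \<exists>k. rs_chain X k x y then enat (LEAST k. rs_chain X k x y) else \<infinity>)"

lemma path_dist_hop_dist: "path_dist X x y = ennreal_of_enat (hop_dist X x y)"
  by (simp add: path_dist_def hop_dist_def)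

lemma hop_dist_le_enat_iff:
  assumes X: "rs_obj X" and y: "y \<in> rcarrier X"
  shows "hop_dist X x y \<le> enat n \<longleftrightarrow> rs_chain X n x y"
proof
  assume le: "hop_dist X x y \<le> enat n"
  then have ex: "\<exists>k. rs_chain X k x y" unfolding hop_dist_def by (auto split: if_splits)
  with le have "(LEAST k. rs_chain X k x y) \<le> n" unfolding hop_dist_def by simp
  moreover have "rs_chain X (LEAST k. rs_chain X k x y) x y" using ex by (rule LeastI_ex)
  ultimately show "rs_chain X n x y" using rs_chain_pad[OF X y] by blast
next
  assume "rs_chain X n x y"
  then show "hop_dist X x y \<le> enat n" unfolding hop_dist_def by (auto intro: Least_le)
qed

lemma hop_dist_refl: "hop_dist X x x = 0"
proof -
  have "(LEAST k. rs_chain X k x x) = 0" using rs_chain_refl by (intro Least_equality) auto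
  then show ?thesis unfolding hop_dist_def using rs_chain_refl[of X x] by (auto simp: zero_enat_def)
qed

lemma hop_dist_sym:
  assumes X: "rs_obj X" and "x \<in> rcarrier X" and "y \<in> rcarrier X"
  shows "hop_dist X x y = hop_dist X y x"
  using assms hop_dist_le_enat_iff[OF X] rs_chain_sym[OF X] by (intro enat_eqI) blast

lemma hop_dist_triangle:
  assumes X: "rs_obj X" and y: "y \<in> rcarrier X" and z: "z \<in> rcarrier X"
  shows "hop_dist X x z \<le> hop_dist X x y + hop_dist X y z"
proof (cases "hop_dist X x y" "hop_dist X y z" rule: enat2_cases)
  case (enat_enat a b)
  then have "rs_chain X a x y" and "rs_chain X b y z"
    using hop_dist_le_enat_iff[OF X y, of x a] hop_dist_le_enat_iff[OF X z, of y b] by simp_all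
  then have "rs_chain X (a + b) x z"
    by (rule rs_chain_trans)
  then show ?thesis
    using enat_enat hop_dist_le_enat_iff[OF X z, of x "a + b"] by simp
qed simp_all

lemma hop_dist_hom:
  assumes X: "rs_obj X" and Y: "rs_obj Y" and f: "f \<in> rs_hom X Y" and y: "y \<in> rcarrier X"
  shows "hop_dist Y (f x) (f y) \<le> hop_dist X x y"
proof (rule enat_leI)
  fix n assume "hop_dist X x y \<le> enat n"
  then have "rs_chain Y n (f x) (f y)" using hop_dist_le_enat_iff[OF X y] rs_chain_hom[OF f] by blast
  moreover have "f y \<in> rcarrier Y" using f y unfolding rs_hom_def by blast
  ultimately show "hop_dist Y (f x) (f y) \<le> enat n" using hop_dist_le_enat_iff[OF Y] by blast
qed

lemma hop_dist_prod:
  assumes X: "rs_obj X" and Y: "rs_obj Y" and "x' \<in> rcarrier X" and "y' \<in> rcarrier Y"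
  shows "hop_dist (rs_prod X Y) (x, y) (x', y') = max (hop_dist X x x') (hop_dist Y y y')"
proof (rule enat_eqI)
  fix n
  have "(x', y') \<in> rcarrier (rs_prod X Y)" using assms by (simp add: rs_prod_def)
  then show "hop_dist (rs_prod X Y) (x, y) (x', y') \<le> enat n
      \<longleftrightarrow> max (hop_dist X x x') (hop_dist Y y y') \<le> enat n"
    using assms hop_dist_le_enat_iff[OF rs_obj_prod[OF X Y]] hop_dist_le_enat_iff[OF X]
      hop_dist_le_enat_iff[OF Y] rs_chain_prod_iff by simp
qed

lemma hop_dist_M: "hop_dist (rs_M S) x y = (if x = y then 0 else \<infinity>)"
  by (cases "x = y") (auto simp: hop_dist_refl hop_dist_def dest: rs_chain_M_eq)

lemma hop_dist_exp_M:
  assumes Y: "rs_obj Y" and f: "f \<in> S \<rightarrow>\<^sub>E rcarrier Y" and g: "g \<in> S \<rightarrow>\<^sub>E rcarrier Y"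
  shows "hop_dist (rs_exp (rs_M S) Y) f g = (SUP x\<in>S. hop_dist Y (f x) (g x))"
proof (rule enat_eqI)
  fix n
  have "hop_dist (rs_exp (rs_M S) Y) f g \<le> enat n \<longleftrightarrow> rs_chain (rs_exp (rs_M S) Y) n f g"
    using g by (intro hop_dist_le_enat_iff rs_obj_exp_M Y) (simp add: rcarrier_exp_M)
  then show "hop_dist (rs_exp (rs_M S) Y) f g \<le> enat n
      \<longleftrightarrow> (SUP x\<in>S. hop_dist Y (f x) (g x)) \<le> enat n"
    unfolding SUP_le_iff rs_chain_exp_M_iff[OF Y f g]
    using hop_dist_le_enat_iff[OF Y PiE_mem[OF g]] by blast
qed

lemma met_obj_path_P: "rs_obj X \<Longrightarrow> met_obj (path_P X)"
  unfolding met_obj_def path_P_def path_dist_hop_dist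
  by (auto simp: hop_dist_refl hop_dist_sym hop_dist_triangle simp flip: ennreal_of_enat_plus)

lemma path_P_mor_met_hom:
  assumes "rs_obj X" and "rs_obj Y" and f: "f \<in> rs_hom X Y"
  shows "path_P_mor f \<in> met_hom (path_P X) (path_P Y)"
  using hop_dist_hom[OF assms] f
  unfolding met_hom_def path_P_def path_P_mor_def rs_hom_def path_dist_hop_dist by auto

lemma path_P_one: "path_P rs_one = met_one"
  by (simp add: path_P_def met_one_def rs_one_def path_dist_hop_dist hop_dist_refl)

lemma path_P_prod:
  assumes X: "rs_obj X" and Y: "rs_obj Y"
  shows "path_P (rs_prod X Y) = met_prod (path_P X) (path_P Y)"
proof -
  have "path_dist (rs_prod X Y) (x, y) (x', y') = max (path_dist X x x') (path_dist Y y y')"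
    if "x' \<in> rcarrier X" and "y' \<in> rcarrier Y" for x y x' y'
    using hop_dist_prod[OF X Y that] by (simp add: path_dist_hop_dist max_def)
  then show ?thesis
    by (auto simp: path_P_def met_prod_def rs_prod_def fun_eq_iff)
qed

lemma path_P_M: "path_P (rs_M S) = inf_met S"
  unfolding path_P_def path_dist_hop_dist hop_dist_M
  by (auto simp: inf_met_def rs_M_def fun_eq_iff)

lemma met_hom_inf_met:
  assumes "met_obj B"
  shows "met_hom (inf_met S) B = S \<rightarrow> mcarrier B"
  using assms unfolding met_hom_def inf_met_def met_obj_def by auto

lemma path_P_exp_M:
  assumes Y: "rs_obj Y"
  shows "path_P (rs_exp (rs_M S) Y) = met_lolli (inf_met S) (path_P Y)"
proof -
  have carrier: "met_hom (inf_met S) (path_P Y) \<inter> extensional S = S \<rightarrow>\<^sub>E rcarrier Y"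
    unfolding met_hom_inf_met[OF met_obj_path_P[OF Y]] PiE_def by (simp add: path_P_def)
  have "path_dist (rs_exp (rs_M S) Y) f g = (SUP x\<in>S. mdist (path_P Y) (f x) (g x))"
    if "f \<in> S \<rightarrow>\<^sub>E rcarrier Y" and "g \<in> S \<rightarrow>\<^sub>E rcarrier Y" for f g
  proof -
    have "path_dist (rs_exp (rs_M S) Y) f g = ennreal_of_enat (SUP x\<in>S. hop_dist Y (f x) (g x))"
      by (simp add: path_dist_hop_dist hop_dist_exp_M[OF Y that])
    also have "\<dots> = (SUP x\<in>S. path_dist Y (f x) (g x))"
      by (simp add: ennreal_of_enat_Sup image_image path_dist_hop_dist)
    also have "\<dots> = (SUP x\<in>S. mdist (path_P Y) (f x) (g x))"
      using that by (intro SUP_cong) (auto simp: path_P_def)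
    finally show ?thesis .
  qed
  then show ?thesis
    using carrier by (auto simp: path_P_def met_lolli_def rcarrier_exp_M inf_met_def fun_eq_iff)
qed

theorem theorem6:
  shows "
    \<comment> \<open>(1) P is a functor RSRel \<rightarrow> Met ...\<close>
    (\<forall>X :: 'a rsrel. rs_obj X \<longrightarrow> met_obj (path_P X))
  \<and> (\<forall>(X :: 'a rsrel) (Y :: 'b rsrel) f. rs_obj X \<and> rs_obj Y \<and> f \<in> rs_hom X Y
        \<longrightarrow> path_P_mor f \<in> met_hom (path_P X) (path_P Y))
  \<and> (\<forall>X :: 'a rsrel. rs_obj X \<longrightarrow> path_P_mor (rs_id X) = met_id (path_P X))
  \<and> (\<forall>(f :: 'a \<Rightarrow> 'b) (g :: 'b \<Rightarrow> 'c). path_P_mor (g \<circ> f) = path_P_mor g \<circ> path_P_mor f)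
    \<comment> \<open>... which is strict symmetric monoidal\<close>
  \<and> path_P rs_one = met_one
  \<and> (\<forall>(X :: 'a rsrel) (Y :: 'b rsrel). rs_obj X \<and> rs_obj Y
        \<longrightarrow> path_P (rs_prod X Y) = met_prod (path_P X) (path_P Y))
  \<and> (\<forall>(f :: 'a \<Rightarrow> 'c) (g :: 'b \<Rightarrow> 'd).
        path_P_mor (rs_prod_mor f g) = met_prod_mor (path_P_mor f) (path_P_mor g))
  \<and> path_P_mor (rs_assoc :: ('a \<times> 'b) \<times> 'c \<Rightarrow> _) = met_assoc
  \<and> path_P_mor (rs_lunit :: unit \<times> 'a \<Rightarrow> 'a) = met_lunit
  \<and> path_P_mor (rs_runit :: 'a \<times> unit \<Rightarrow> 'a) = met_runit
  \<and> path_P_mor (rs_swap :: 'a \<times> 'b \<Rightarrow> _) = met_swap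
    \<comment> \<open>(2) (Id, P) is a map of adjunctions from M \<stileturn> q to \<infinity>\<cdot>- \<stileturn> p\<close>
  \<and> (\<forall>S :: 's set. path_P (rs_M S) = inf_met S)
  \<and> (\<forall>f :: 's \<Rightarrow> 't. path_P_mor (rs_M_mor f) = inf_met_mor f)
  \<and> (\<forall>X :: 'a rsrel. rs_obj X \<longrightarrow> rs_q X = met_p (path_P X))
  \<and> (\<forall>f :: 'a \<Rightarrow> 'b. rs_q_mor f = met_p_mor (path_P_mor f))
  \<and> (\<forall>S :: 's set. rs_Mq_unit S = met_inf_unit S)
    \<comment> \<open>(3) for every set S, (P, P) is a map of adjunctions
        from (- \<times> M S \<stileturn> M S \<Rightarrow> -) to (- \<times> \<infinity>\<cdot>S \<stileturn> \<infinity>\<cdot>S \<multimap> -)\<close>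
  \<and> (\<forall>(S :: 's set) (Y :: 'a rsrel). rs_obj Y
        \<longrightarrow> path_P (rs_prod Y (rs_M S)) = met_prod (path_P Y) (inf_met S))
  \<and> (\<forall>(S :: 's set) (f :: 'a \<Rightarrow> 'b).
        path_P_mor (rs_prod_mor f (rs_id (rs_M S)))
          = met_prod_mor (path_P_mor f) (met_id (inf_met S)))
  \<and> (\<forall>(S :: 's set) (Y :: 'a rsrel). rs_obj Y
        \<longrightarrow> path_P (rs_exp (rs_M S) Y) = met_lolli (inf_met S) (path_P Y))
  \<and> (\<forall>(S :: 's set) (g :: 'a \<Rightarrow> 'b).
        path_P_mor (rs_exp_mor (rs_M S) g) = met_lolli_mor (inf_met S) (path_P_mor g))
  \<and> (\<forall>(S :: 's set) (Y :: 'a rsrel). rs_obj Y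
        \<longrightarrow> path_P_mor (rs_exp_unit (rs_M S) Y) = met_lolli_unit (inf_met S) (path_P Y))"
proof (intro conjI allI impI)
  show "\<And>X. rs_obj X \<Longrightarrow> met_obj (path_P X)"
    by (fact met_obj_path_P)
  show "\<And>X Y f. rs_obj X \<and> rs_obj Y \<and> f \<in> rs_hom X Y
      \<Longrightarrow> path_P_mor f \<in> met_hom (path_P X) (path_P Y)"
    using path_P_mor_met_hom by blast
  show "path_P rs_one = met_one"
    by (fact path_P_one)
  show "\<And>X Y. rs_obj X \<and> rs_obj Y \<Longrightarrow> path_P (rs_prod X Y) = met_prod (path_P X) (path_P Y)"
    using path_P_prod by blast
  show "\<And>S. path_P (rs_M S) = inf_met S"
    by (fact path_P_M)
  show "\<And>S Y. rs_obj Y \<Longrightarrow> path_P (rs_prod Y (rs_M S)) = met_prod (path_P Y) (inf_met S)"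
    using path_P_prod rs_obj_M path_P_M by metis
  show "\<And>S Y. rs_obj Y \<Longrightarrow> path_P (rs_exp (rs_M S) Y) = met_lolli (inf_met S) (path_P Y)"
    by (fact path_P_exp_M)
qed (simp_all add: path_P_mor_def path_P_def inf_met_def rs_M_def rs_id_def met_id_def
  rs_prod_mor_def met_prod_mor_def rs_assoc_def met_assoc_def rs_lunit_def met_lunit_def
  rs_runit_def met_runit_def rs_swap_def met_swap_def rs_M_mor_def inf_met_mor_def
  rs_q_def met_p_def rs_q_mor_def met_p_mor_def rs_Mq_unit_def met_inf_unit_def
  rs_exp_mor_def met_lolli_mor_def rs_exp_unit_def met_lolli_unit_def)

end
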